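(* Let $n\ge1$, $\varepsilon\in D$, $s\in D^n$, and let $\rho^{(j)},\ell_j,\Delta_j,e_j,j',p(j)$ be defined by the recursion below. Then for every $0\le j\le n$: $\rho^{(j)}_0\neq0$, $\deg\rho^{(j)}\le\ell_j$, $(\rho^{(j)},\ell_j)\in\mathrm{Rp}(s^{(j)})$, and $x^{\ell_j-\deg\rho^{(j)}}\big(\rho^{(j)}\big)^{*}\in\mathrm{Min}(s^{(j)})$; in particular $\ell_j=L(s^{(j)})$. Moreover, for $j\ge1$: if $\Delta_j=0$ then $\ell_j=\ell_{j-1}$ and $e_j=e_{j-1}+1$; if $\Delta_j\neq0$ then $\ell_j=\max\{e_{j-1},0\}+\ell_{j-1}=j'+1-\ell_{j'}$ and $e_j=-|e_{j-1}|+1$.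
   Context: Let $D$ be a commutative integral domain with $1\neq 0$. For nonzero $f\in D[x]$, $f^{*}(x)=x^{\deg f}f(x^{-1})$. For $s=(s_1,\dots,s_n)\in D^n$ let $s^{(i)}=(s_1,\dots,s_i)$, $\overline{s}=s_1x+\cdots+s_nx^n$, $\underline{s}=s_1x^{-1}+\cdots+s_nx^{-n}\in D[x,x^{-1}]$, and $F_k$ the coefficient of $x^k$ in a Laurent polynomial $F$. A polynomial $f$ is an annihilator of $s$ if $f=0$ or $d=\deg f\ge0$ and $(f\cdot\underline{s})_{d-j}=0$ for $d+1\le j\le n$; $\mathrm{Min}(s)$ is the set of nonzero annihilators of least degree and $L(s)$ that degree. A reciprocal pair for $s$ is $(g,\ell)$ with $g\in D[x]$, $0\le\ell\le n$, $g_0\neq0$, $\deg g\le\ell$, and $\sum_{k=0}^{\deg g}g_ks_{j-k}=0$ for $\ell+1\le j\le n$; $\mathrm{Rp}(s)$ is the set of these. Recursion (relative to fixed $\varepsilon\in D$): $\rho^{(-1)}=\varepsilon$, $\rho^{(0)}=1$, $\ell_{-1}=\ell_0=0$, $\Delta_0=1$, $0'=-1$, $p(0)=1$, and $e_j=j+1-2\ell_j$ for $j\ge0$. For $j=1,\dots,n$ successively: $\Delta_j=(\rho^{(j-1)}\cdot\overline{s})_j=\sum_{k=0}^{\deg\rho^{(j-1)}}\rho^{(j-1)}_ks_{j-k}$; $j'=(j-1)'$ if $\Delta_j=0$ or $e_{j-1}\le0$, and $j'=j-1$ if $\Delta_j\neq0$ and $e_{j-1}>0$; $p(j)=j-j'$;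 $\Delta'_j=\Delta_{(j-1)'+1}$; $\ell_j=\ell_{j-1}$ if $\Delta_j=0$ or $e_{j-1}\le0$, and $\ell_j=j-\ell_{j-1}$ otherwise; $\rho^{(j)}=\rho^{(j-1)}$ if $\Delta_j=0$, and otherwise $\rho^{(j)}=\Delta'_j\,\rho^{(j-1)}-\Delta_j\,x^{p(j-1)}\rho^{((j-1)')}$. *)

theory Defs
  imports "HOL-Computational_Algebra.Polynomial"
begin

text \<open>A sequence s in D^n is a function nat => 'a of which only s 1, ..., s n matter;
  its prefix s^(i) is the same function considered with length i.\<close>

text \<open>Coefficient of x^m (m an integer) in the Laurent polynomial f * (s_1 x^-1 + ... + s_n x^-n).\<close>
definition lcoeff_under :: "'a::comm_ring_1 poly \<Rightarrow> nat \<Rightarrow> (nat \<Rightarrow> 'a) \<Rightarrow> int \<Rightarrow> 'a" where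
  "lcoeff_under f n s m =
     (\<Sum>k=0..degree f. \<Sum>i=1..n. if int k - int i = m then coeff f k * s i else 0)"

text \<open>Coefficient of x^m in the polynomial f * (s_1 x + ... + s_n x^n).\<close>
definition coeff_over :: "'a::comm_ring_1 poly \<Rightarrow> nat \<Rightarrow> (nat \<Rightarrow> 'a) \<Rightarrow> nat \<Rightarrow> 'a" where
  "coeff_over f n s m =
     (\<Sum>k=0..degree f. \<Sum>i=1..n. if k + i = m then coeff f k * s i else 0)"

definition is_annihilator :: "nat \<Rightarrow> (nat \<Rightarrow> 'a::comm_ring_1) \<Rightarrow> 'a poly \<Rightarrow> bool" where
  "is_annihilator n s f \<longleftrightarrow>
     f = 0 \<or> (\<forall>j. degree f + 1 \<le> j \<and> j \<le> n \<longrightarrow> lcoeff_under f n s (int (degree f) - int j) = 0)"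

definition MinSet :: "nat \<Rightarrow> (nat \<Rightarrow> 'a::comm_ring_1) \<Rightarrow> 'a poly set" where
  "MinSet n s = {f. f \<noteq> 0 \<and> is_annihilator n s f \<and>
      (\<forall>g. g \<noteq> 0 \<and> is_annihilator n s g \<longrightarrow> degree f \<le> degree g)}"

definition Lc :: "nat \<Rightarrow> (nat \<Rightarrow> 'a::comm_ring_1) \<Rightarrow> nat" where
  "Lc n s = (LEAST d. \<exists>f. f \<noteq> 0 \<and> is_annihilator n s f \<and> degree f = d)"

definition Rp :: "nat \<Rightarrow> (nat \<Rightarrow> 'a::comm_ring_1) \<Rightarrow> ('a poly \<times> nat) set" where
  "Rp n s = {(g, l). l \<le> n \<and> coeff g 0 \<noteq> 0 \<and> degree g \<le> l \<and>
      (\<forall>j. l + 1 \<le> j \<and> j \<le> n \<longrightarrow> (\<Sum>k=0..degree g. coeff g k * s (j - k)) = 0)}"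

text \<open>State after step j:
  (rho^(j), rho^(j'), l_j, j', Delta_{j'+1}), where j' is an integer (0' = -1)
  and rho^(-1) = eps, Delta_0 = 1.\<close>
fun bm_state :: "'a::idom \<Rightarrow> nat \<Rightarrow> (nat \<Rightarrow> 'a) \<Rightarrow> nat \<Rightarrow> 'a poly \<times> 'a poly \<times> nat \<times> int \<times> 'a" where
  "bm_state eps n s 0 = (1, [:eps:], 0, -1, 1)"
| "bm_state eps n s (Suc i) =
     (let (r, rp, l, jp, dp) = bm_state eps n s i;
          j = Suc i;
          dlt = coeff_over r n s j;
          e = int i + 1 - 2 * int l;
          jump = (dlt \<noteq> 0 \<and> e > 0);
          p = nat (int i - jp);
          r' = (if dlt = 0 then r else smult dp r - smult dlt (monom 1 p * rp));
          l' = (if jump then j - l else l);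
          jp' = (if jump then int i else jp);
          rp' = (if jump then r else rp);
          dp' = (if jump then dlt else dp)
      in (r', rp', l', jp', dp'))"

definition rho :: "'a::idom \<Rightarrow> nat \<Rightarrow> (nat \<Rightarrow> 'a) \<Rightarrow> nat \<Rightarrow> 'a poly" where
  "rho eps n s j = fst (bm_state eps n s j)"

definition ell :: "'a::idom \<Rightarrow> nat \<Rightarrow> (nat \<Rightarrow> 'a) \<Rightarrow> nat \<Rightarrow> nat" where
  "ell eps n s j = fst (snd (snd (bm_state eps n s j)))"

definition ell_int :: "'a::idom \<Rightarrow> nat \<Rightarrow> (nat \<Rightarrow> 'a) \<Rightarrow> int \<Rightarrow> nat" where
  "ell_int eps n s i = (if i < 0 then 0 else ell eps n s (nat i))"

definition jprime :: "'a::idom \<Rightarrow> nat \<Rightarrow> (nat \<Rightarrow> 'a) \<Rightarrow> nat \<Rightarrow> int" where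
  "jprime eps n s j = fst (snd (snd (snd (bm_state eps n s j))))"

definition Delta :: "'a::idom \<Rightarrow> nat \<Rightarrow> (nat \<Rightarrow> 'a) \<Rightarrow> nat \<Rightarrow> 'a" where
  "Delta eps n s j = (if j = 0 then 1 else coeff_over (rho eps n s (j - 1)) n s j)"

definition ee :: "'a::idom \<Rightarrow> nat \<Rightarrow> (nat \<Rightarrow> 'a) \<Rightarrow> nat \<Rightarrow> int" where
  "ee eps n s j = int j + 1 - 2 * int (ell eps n s j)"

end

theory Submission
  imports Defs
begin

text \<open>
  The sequence s_1, ..., s_n is encoded by the polynomial S = s_1 x + ... + s_n x^n.
  All conditions of the paper then become vanishing conditions on the coefficients of
  products r * S: (r, l) is a reciprocal pair for s^(t) iff r_0 \<noteq> 0, deg r \<le> l \<le> t and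
  (r * S)_k = 0 for l < k \<le> t; and a nonzero f annihilates s^(t) iff its reversal f*
  satisfies (f* * S)_k = 0 for deg f < k \<le> t.  So x^(l - deg r) r* is an annihilator of
  degree l whenever (r, l) is a reciprocal pair.

  The core is an invariant of the state (rho^(j), rho^(j'), l_j, j', Delta_(j'+1)):
  (rho^(j), l_j) is a reciprocal pair for s^(j), no nonzero annihilator of s^(j) has
  degree below l_j, l_j = j' + 1 - l_(j'), and rho^(j') annihilates s^(j') but has
  discrepancy Delta_(j'+1) at j'+1.  The step preserves it because the update
  Delta'_j rho^(j-1) - Delta_j x^p rho^((j-1)') cancels the new discrepancy while keeping
  the older zeros, and because of Massey's degree bound, which shows that the new length
  max(l_(j-1), j - l_(j-1)) cannot be beaten.
\<close>

subsection \<open>The sequence as a polynomial\<close>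

definition seq_poly :: "nat \<Rightarrow> (nat \<Rightarrow> 'a::comm_ring_1) \<Rightarrow> 'a poly" where
  "seq_poly n s = (\<Sum>i\<in>{1..n}. monom (s i) i)"

lemma coeff_seq_poly: "coeff (seq_poly n s) i = (if 1 \<le> i \<and> i \<le> n then s i else 0)"
  unfolding seq_poly_def by (simp add: coeff_sum coeff_monom)

lemma coeff_mult_seq_poly:
  assumes "t \<le> n"
  shows "coeff (r * seq_poly n s) t = (\<Sum>k<t. coeff r k * s (t - k))"
proof -
  have "coeff (r * seq_poly n s) t = (\<Sum>k\<le>t. coeff r k * coeff (seq_poly n s) (t - k))"
    by (simp add: coeff_mult)
  also have "\<dots> = (\<Sum>k<t. coeff r k * coeff (seq_poly n s) (t - k))"
    by (simp add: lessThan_Suc_atMost[symmetric] coeff_seq_poly)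
  also have "\<dots> = (\<Sum>k<t. coeff r k * s (t - k))"
    using assms by (intro sum.cong) (auto simp: coeff_seq_poly)
  finally show ?thesis .
qed

lemma coeff_over_eq_coeff_mult:
  assumes "t \<le> n"
  shows "coeff_over r n s t = coeff (r * seq_poly n s) t"
proof -
  let ?g = "\<lambda>k. if k < t then coeff r k * s (t - k) else 0"
  have inner: "(\<Sum>i=1..n. if k + i = t then coeff r k * s i else 0) = ?g k" for k
  proof -
    have "(\<Sum>i=1..n. if k + i = t then coeff r k * s i else 0)
        = (\<Sum>i\<in>{1..n}. if i = t - k \<and> k < t then coeff r k * s i else 0)"
      by (intro sum.cong) auto
    also have "\<dots> = ?g k"
      using assms by (cases "k < t") (auto simp: sum.delta)
    finally show ?thesis .
  qed
  have "coeff_over r n s t = (\<Sum>k=0..degree r. ?g k)"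
    unfolding coeff_over_def using inner by simp
  also have "\<dots> = (\<Sum>k\<in>{..<degree r + t + 1}. ?g k)"
    by (intro sum.mono_neutral_left) (auto simp: coeff_eq_0)
  also have "\<dots> = (\<Sum>k<t. ?g k)"
    by (intro sum.mono_neutral_right) auto
  also have "\<dots> = coeff (r * seq_poly n s) t"
    using assms by (simp add: coeff_mult_seq_poly)
  finally show ?thesis .
qed

lemma lcoeff_under_eq_coeff_mult:
  fixes f :: "'a::comm_ring_1 poly"
  assumes "degree f < j" "j \<le> N" "N \<le> n"
  shows "lcoeff_under f N s (int (degree f) - int j) = coeff (reflect_poly f * seq_poly n s) j"
proof -
  let ?d = "degree f"
  have inner: "(\<Sum>i=1..N. if int k - int i = int ?d - int j then coeff f k * s i else 0)
      = coeff f k * s (k + j - ?d)" if "k \<le> ?d" for k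
  proof -
    have "(\<Sum>i=1..N. if int k - int i = int ?d - int j then coeff f k * s i else 0)
        = (\<Sum>i\<in>{1..N}. if i = k + j - ?d then coeff f k * s i else 0)"
      using that assms by (intro sum.cong) auto
    moreover have "k + j - ?d \<in> {1..N}"
      using that assms by auto
    ultimately show ?thesis
      by (simp add: sum.delta)
  qed
  have "lcoeff_under f N s (int ?d - int j) = (\<Sum>k=0..?d. coeff f k * s (k + j - ?d))"
    unfolding lcoeff_under_def using inner by (intro sum.cong) auto
  also have "\<dots> = (\<Sum>m=0..?d. coeff f (?d - m) * s (j - m))"
    using assms by (subst sum.atLeastAtMost_rev) (intro sum.cong, auto simp: algebra_simps)
  also have "\<dots> = (\<Sum>m<j. coeff (reflect_poly f) m * s (j - m))"
    using assms by (intro sum.mono_neutral_cong_left) (auto simp: coeff_reflect_poly)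
  also have "\<dots> = coeff (reflect_poly f * seq_poly n s) j"
    using assms by (simp add: coeff_mult_seq_poly)
  finally show ?thesis .
qed

subsection \<open>Annihilation and reciprocal pairs in polynomial form\<close>

definition annihilates :: "'a::comm_ring_1 poly \<Rightarrow> 'a poly \<Rightarrow> nat \<Rightarrow> nat \<Rightarrow> bool" where
  "annihilates S r l t \<longleftrightarrow> (\<forall>k. l < k \<and> k \<le> t \<longrightarrow> coeff (r * S) k = 0)"

definition rec_pair :: "'a::comm_ring_1 poly \<Rightarrow> 'a poly \<Rightarrow> nat \<Rightarrow> nat \<Rightarrow> bool" where
  "rec_pair S r l t \<longleftrightarrow> coeff r 0 \<noteq> 0 \<and> degree r \<le> l \<and> l \<le> t \<and> annihilates S r l t"

lemma Rp_iff_rec_pair: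
  assumes "t \<le> n"
  shows "(r, l) \<in> Rp t s \<longleftrightarrow> rec_pair (seq_poly n s) r l t"
proof -
  have "(\<Sum>k=0..degree r. coeff r k * s (j - k)) = coeff (r * seq_poly n s) j"
    if "degree r < j" "j \<le> t" for j
    unfolding coeff_mult_seq_poly[OF order.trans[OF \<open>j \<le> t\<close> assms]] using that
    by (intro sum.mono_neutral_left) (auto simp: coeff_eq_0)
  then show ?thesis
    unfolding Rp_def rec_pair_def annihilates_def by (auto simp: Suc_le_eq)
qed

lemma annihilator_iff_reflect:
  fixes f :: "'a::comm_ring_1 poly"
  assumes "f \<noteq> 0" "N \<le> n"
  shows "is_annihilator N s f \<longleftrightarrow> annihilates (seq_poly n s) (reflect_poly f) (degree f) N"
  unfolding is_annihilator_def annihilates_def using assms lcoeff_under_eq_coeff_mult[of f _ N n s]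
  by (auto simp: Suc_le_eq)

lemma is_annihilator_prefix:
  assumes "is_annihilator N s f" "M \<le> N"
  shows "is_annihilator M s f"
proof (cases "f = 0")
  case True
  then show ?thesis by (simp add: is_annihilator_def)
next
  case False
  with assms show ?thesis
    using annihilator_iff_reflect[of f M N s] annihilator_iff_reflect[of f N N s]
    by (auto simp: annihilates_def)
qed

lemma reflect_poly_monom_1: "reflect_poly (monom (1::'a::comm_ring_1) a) = 1"
  by (rule poly_eqI) (auto simp: coeff_reflect_poly degree_monom_eq coeff_monom)

lemma reversal_is_annihilator:
  fixes r :: "'a::idom poly"
  assumes "rec_pair (seq_poly n s) r l t" "t \<le> n"
    and f: "f = monom 1 (l - degree r) * reflect_poly r"
  shows "f \<noteq> 0" "degree f = l" "is_annihilator t s f"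
proof -
  have r0: "coeff r 0 \<noteq> 0" and rdeg: "degree r \<le> l"
    and rann: "annihilates (seq_poly n s) r l t"
    using assms(1) by (auto simp: rec_pair_def)
  then have "r \<noteq> 0" by auto
  then show "f \<noteq> 0" by (simp add: f monom_eq_0_iff)
  show "degree f = l"
    unfolding f using \<open>r \<noteq> 0\<close> r0 rdeg
    by (subst degree_mult_eq) (auto simp: degree_monom_eq monom_eq_0_iff)
  moreover have "reflect_poly f = r"
    unfolding f using r0 by (simp add: reflect_poly_mult reflect_poly_monom_1)
  ultimately show "is_annihilator t s f"
    using annihilator_iff_reflect[OF \<open>f \<noteq> 0\<close> \<open>t \<le> n\<close>] rann by simp
qed

lemma MinSet_Lc_of_lower_bound:
  assumes "f \<noteq> 0" "is_annihilator t s f"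
    and bound: "\<forall>g. g \<noteq> 0 \<and> is_annihilator t s g \<longrightarrow> degree f \<le> degree g"
  shows "f \<in> MinSet t s" "Lc t s = degree f"
proof -
  show "f \<in> MinSet t s"
    unfolding MinSet_def using assms by auto
  show "Lc t s = degree f"
    unfolding Lc_def using assms by (intro Least_equality) auto
qed

text \<open>
  Massey's degree bound: if g (with g_0 \<noteq> 0) annihilates the window (d, t+1] while h
  annihilates (l, t] but not t+1, then t+1 \<le> d + l.  Compare the coefficient of x^(t+1)
  in h * (g * S) = g * (h * S).
\<close>
lemma massey_bound:
  fixes g h S :: "'a::idom poly"
  assumes g0: "coeff g 0 \<noteq> 0" and gd: "degree g \<le> d" and ga: "annihilates S g d (Suc t)"
    and hd: "degree h \<le> l" and ha: "annihilates S h l t" and ht: "coeff (h * S) (Suc t) \<noteq> 0"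
  shows "Suc t \<le> d + l"
proof (rule ccontr)
  assume "\<not> Suc t \<le> d + l"
  then have lt: "d + l < Suc t" by simp
  have "coeff h a * coeff (g * S) (Suc t - a) = 0" if "a \<le> Suc t" for a
    using ga hd lt that by (cases "a \<le> l") (auto simp: annihilates_def coeff_eq_0)
  then have lhs: "coeff (h * (g * S)) (Suc t) = 0"
    unfolding coeff_mult[of h] by (intro sum.neutral) auto
  have rhs_terms: "coeff g b * coeff (h * S) (Suc t - b) =
      (if b = 0 then coeff g 0 * coeff (h * S) (Suc t) else 0)" if "b \<le> Suc t" for b
  proof (cases "0 < b \<and> b \<le> d")
    case True
    then have "l < Suc t - b \<and> Suc t - b \<le> t"
      using lt by linarith
    then show ?thesis
      using ha True by (simp add: annihilates_def)
  next
    case False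
    then show ?thesis
      using gd by (auto simp: coeff_eq_0)
  qed
  have "coeff (g * (h * S)) (Suc t) = (\<Sum>b\<le>Suc t. if b = 0 then coeff g 0 * coeff (h * S) (Suc t) else 0)"
    unfolding coeff_mult[of g] using rhs_terms by (intro sum.cong) auto
  also have "\<dots> = coeff g 0 * coeff (h * S) (Suc t)"
    by (subst sum.delta) auto
  finally have rhs: "coeff (g * (h * S)) (Suc t) = coeff g 0 * coeff (h * S) (Suc t)" .
  have "h * (g * S) = g * (h * S)"
    by (simp add: ac_simps)
  with lhs rhs g0 ht show False by simp
qed

subsection \<open>The update step\<close>

text \<open>
  Combining r, whose discrepancy at t+1 is dlt, with q, whose discrepancy there is dp,
  into dp r - dlt q cancels the discrepancy and keeps the zeros below.
\<close>
lemma combine_rec_pair: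
  fixes r q S :: "'a::idom poly"
  assumes r0: "coeff r 0 \<noteq> 0" and rdeg: "degree r \<le> l" and rann: "annihilates S r l t"
    and dlt: "coeff (r * S) (Suc t) = dlt"
    and q0: "coeff q 0 = 0" and qdeg: "degree q \<le> l'" and qann: "annihilates S q l' t"
    and dp: "l' < Suc t \<Longrightarrow> coeff (q * S) (Suc t) = dp"
    and dp0: "dp \<noteq> 0" and ll': "l \<le> l'" and l't: "l' \<le> Suc t"
  shows "rec_pair S (smult dp r - smult dlt q) l' (Suc t)"
proof -
  have "degree (smult dp r - smult dlt q) \<le> l'"
    using rdeg qdeg ll' by (intro degree_diff_le) (auto intro: order.trans[OF degree_smult_le])
  moreover have "coeff (smult dp r - smult dlt q) 0 \<noteq> 0"
    using r0 q0 dp0 by simp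
  moreover have "coeff ((smult dp r - smult dlt q) * S) k = 0" if "l' < k" "k \<le> Suc t" for k
  proof -
    have "coeff ((smult dp r - smult dlt q) * S) k = dp * coeff (r * S) k - dlt * coeff (q * S) k"
      by (simp add: algebra_simps)
    then show ?thesis
      using that rann qann ll' dlt dp by (cases "k = Suc t") (auto simp: annihilates_def)
  qed
  ultimately show ?thesis
    using l't by (simp add: rec_pair_def annihilates_def)
qed

lemma shift_annihilates:
  fixes q S :: "'a::comm_ring_1 poly"
  assumes qdeg: "degree q \<le> m" and qann: "annihilates S q m j"
    and qdisc: "coeff (q * S) (Suc j) = dp" and pm: "p + m \<le> l'"
  shows "degree (monom 1 p * q) \<le> l'"
    "annihilates S (monom 1 p * q) l' (p + j)"
    "coeff (monom 1 p * q * S) (Suc (p + j)) = dp"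
proof -
  have shift: "coeff (monom 1 p * q * S) k = (if k < p then 0 else coeff (q * S) (k - p))" for k
    by (simp add: mult.assoc coeff_monom_mult)
  have "degree (monom (1::'a) p * q) \<le> p + degree q"
    by (rule order.trans[OF degree_mult_le]) (simp add: degree_monom_le)
  then show "degree (monom 1 p * q) \<le> l'"
    using qdeg pm by linarith
  show "annihilates S (monom 1 p * q) l' (p + j)"
    unfolding annihilates_def shift
  proof (intro allI impI)
    fix k
    assume "l' < k \<and> k \<le> p + j"
    then show "(if k < p then 0 else coeff (q * S) (k - p)) = 0"
      using qann pm unfolding annihilates_def by (auto dest: spec[of _ "k - p"])
  qed
  show "coeff (monom 1 p * q * S) (Suc (p + j)) = dp"
    using qdisc by (simp add: shift)
qed

text \<open>
  For j' = -1
  the length is i + 1 and nothing needs to be annihilated.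
\<close>
lemma shifted_previous:
  fixes rp S :: "'a::comm_ring_1 poly"
  assumes jp: "-1 \<le> jp" "jp < int i" and len: "int l = jp + 1 - int m"
    and start: "jp = -1 \<Longrightarrow> degree rp = 0 \<and> m = 0"
    and prev: "0 \<le> jp \<Longrightarrow> degree rp \<le> m \<and> annihilates S rp m (nat jp)
                          \<and> coeff (rp * S) (Suc (nat jp)) = dp"
    and l': "Suc i - l \<le> l'" "l' \<le> Suc i"
  defines "q \<equiv> monom 1 (nat (int i - jp)) * rp"
  shows "coeff q 0 = 0 \<and> degree q \<le> l' \<and> annihilates S q l' i \<and>
         (l' < Suc i \<longrightarrow> coeff (q * S) (Suc i) = dp)"
proof -
  have "coeff q 0 = 0"
    using jp by (simp add: q_def coeff_monom_mult)
  moreover have "degree q \<le> l' \<and> annihilates S q l' i \<and>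
                 (l' < Suc i \<longrightarrow> coeff (q * S) (Suc i) = dp)"
  proof (cases "jp = -1")
    case True
    then have "l' = Suc i" "nat (int i - jp) = Suc i"
      using start len l' by auto
    moreover have "degree (monom (1::'a) (Suc i) * rp) \<le> Suc i"
      using start[OF True] degree_mult_le[of "monom (1::'a) (Suc i)" rp]
      by (simp add: degree_monom_eq)
    ultimately show ?thesis
      by (auto simp: q_def annihilates_def)
  next
    case False
    then have "0 \<le> jp" using jp by simp
    then have "nat (int i - jp) + nat jp = i" "nat (int i - jp) + m \<le> l'"
      using jp len l' by auto
    then show ?thesis
      using shift_annihilates[of rp m S "nat jp" dp "nat (int i - jp)" l'] prev[OF \<open>0 \<le> jp\<close>]
      by (simp add: q_def)
  qed
  ultimately show ?thesis by blast
qed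

subsection \<open>The invariant of the recursion\<close>

lemma ell_Suc:
  "ell eps n s (Suc i) =
     (if Delta eps n s (Suc i) = 0 then ell eps n s i else max (ell eps n s i) (Suc i - ell eps n s i))"
proof -
  obtain r rp l jp dp where st: "bm_state eps n s i = (r, rp, l, jp, dp)"
    by (metis prod_cases5)
  show ?thesis
    by (simp add: ell_def Delta_def rho_def st Let_def max_def) linarith
qed

definition bm_inv :: "'a::idom \<Rightarrow> nat \<Rightarrow> (nat \<Rightarrow> 'a) \<Rightarrow> nat \<Rightarrow> bool" where
  "bm_inv eps n s i \<longleftrightarrow> (case bm_state eps n s i of (r, rp, l, jp, dp) \<Rightarrow>
     rec_pair (seq_poly n s) r l i \<and>
     (\<forall>f. f \<noteq> 0 \<and> is_annihilator i s f \<longrightarrow> l \<le> degree f) \<and>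
     -1 \<le> jp \<and> jp < int i \<and> dp \<noteq> 0 \<and> int l = jp + 1 - int (ell_int eps n s jp) \<and>
     (jp = -1 \<longrightarrow> degree rp = 0) \<and>
     (0 \<le> jp \<longrightarrow> rec_pair (seq_poly n s) rp (ell eps n s (nat jp)) (nat jp) \<and>
                 coeff (rp * seq_poly n s) (Suc (nat jp)) = dp))"

lemma bm_inv_0: "bm_inv eps n s 0"
  by (simp add: bm_inv_def ell_int_def rec_pair_def annihilates_def)

lemma length_lower_bound:
  fixes r :: "'a::idom poly"
  assumes rdeg: "degree r \<le> l" and rann: "annihilates (seq_poly n s) r l i"
    and lmin: "\<forall>f. f \<noteq> 0 \<and> is_annihilator i s f \<longrightarrow> l \<le> degree f"
    and f: "f \<noteq> 0" "is_annihilator (Suc i) s f" and iN: "Suc i \<le> n"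
  shows "l \<le> degree f" "coeff (r * seq_poly n s) (Suc i) \<noteq> 0 \<Longrightarrow> Suc i - l \<le> degree f"
proof -
  show "l \<le> degree f"
    using lmin f is_annihilator_prefix[of "Suc i" s f i] by auto
  assume "coeff (r * seq_poly n s) (Suc i) \<noteq> 0"
  moreover have "annihilates (seq_poly n s) (reflect_poly f) (degree f) (Suc i)"
    using annihilator_iff_reflect[OF f(1) iN] f(2) by simp
  ultimately have "Suc i \<le> degree f + l"
    using f(1) rdeg rann degree_reflect_poly_le
    by (intro massey_bound[of "reflect_poly f" "degree f" _ i r l]) auto
  then show "Suc i - l \<le> degree f" by simp
qed

lemma bm_inv_Suc:
  fixes eps :: "'a::idom"
  assumes inv: "bm_inv eps n s i" and iN: "Suc i \<le> n"
  shows "bm_inv eps n s (Suc i)"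
proof -
  obtain r rp l jp dp where st: "bm_state eps n s i = (r, rp, l, jp, dp)"
    by (metis prod_cases5)
  define S where "S = seq_poly n s"
  define dlt where "dlt = coeff (r * S) (Suc i)"
  define l' where "l' = ell eps n s (Suc i)"
  define q where "q = monom 1 (nat (int i - jp)) * rp"
  from inv have r: "rec_pair S r l i"
    and lmin: "\<forall>f. f \<noteq> 0 \<and> is_annihilator i s f \<longrightarrow> l \<le> degree f"
    and jp: "-1 \<le> jp" "jp < int i" and dp0: "dp \<noteq> 0"
    and len: "int l = jp + 1 - int (ell_int eps n s jp)"
    and start: "jp = -1 \<longrightarrow> degree rp = 0"
    and prev: "0 \<le> jp \<longrightarrow> rec_pair S rp (ell eps n s (nat jp)) (nat jp) \<and>
                           coeff (rp * S) (Suc (nat jp)) = dp"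
    unfolding bm_inv_def st S_def by auto
  have ell_i: "ell eps n s i = l"
    by (simp add: ell_def st)
  have "Delta eps n s (Suc i) = dlt"
    using iN by (simp add: Delta_def rho_def st dlt_def S_def coeff_over_eq_coeff_mult)
  then have l': "l' = (if dlt = 0 then l else max l (Suc i - l))"
    by (simp add: l'_def ell_Suc ell_i)
  have li: "l \<le> i"
    using r by (simp add: rec_pair_def)
  have st': "bm_state eps n s (Suc i) =
     (if dlt = 0 then r else smult dp r - smult dlt q, if l < l' then r else rp, l',
      if l < l' then int i else jp, if l < l' then dlt else dp)"
    using iN l' by (auto simp: st Let_def dlt_def S_def q_def coeff_over_eq_coeff_mult max_def)
  have new_rho: "rec_pair S (if dlt = 0 then r else smult dp r - smult dlt q) l' (Suc i)"
  proof (cases "dlt = 0")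
    case True
    then show ?thesis
      using r l' by (auto simp: rec_pair_def annihilates_def dlt_def le_Suc_eq)
  next
    case False
    have "ell_int eps n s jp = ell eps n s (nat jp)" if "0 \<le> jp"
      using that by (simp add: ell_int_def)
    then have "coeff q 0 = 0" "degree q \<le> l'" "annihilates S q l' i"
      "l' < Suc i \<Longrightarrow> coeff (q * S) (Suc i) = dp"
      using shifted_previous[OF jp len, where rp = rp and dp = dp and S = S and l' = l']
        start prev l' li False
      by (auto simp: q_def rec_pair_def ell_int_def)
    then show ?thesis
      using combine_rec_pair[of r l S i dlt q l' dp] r dp0 l' li False
      by (auto simp: rec_pair_def dlt_def)
  qed
  have new_min: "\<forall>f. f \<noteq> 0 \<and> is_annihilator (Suc i) s f \<longrightarrow> l' \<le> degree f"
    using length_lower_bound[of r l n s i] r lmin iN l'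
    by (auto simp: rec_pair_def S_def dlt_def)
  show ?thesis
    unfolding bm_inv_def st' prod.case S_def[symmetric]
    using new_rho new_min jp dp0 len start prev r li l' ell_i
    by (auto simp: ell_int_def dlt_def rec_pair_def)
qed

lemma bm_inv:
  fixes eps :: "'a::idom"
  assumes "j \<le> n"
  shows "bm_inv eps n s j"
  using assms by (induction j) (auto intro: bm_inv_Suc simp: bm_inv_0)

lemma bm_inv_ell:
  assumes "bm_inv eps n s j"
  shows "ell eps n s j \<le> j"
    "int (ell eps n s j) = jprime eps n s j + 1 - int (ell_int eps n s (jprime eps n s j))"
proof -
  obtain r rp l jp dp where st: "bm_state eps n s j = (r, rp, l, jp, dp)"
    by (metis prod_cases5)
  from assms show "ell eps n s j \<le> j"
    "int (ell eps n s j) = jprime eps n s j + 1 - int (ell_int eps n s (jprime eps n s j))"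
    by (simp_all add: bm_inv_def st ell_def jprime_def rec_pair_def)
qed

lemma rho_minimal:
  fixes eps :: "'a::idom"
  assumes jn: "j \<le> n"
  shows "coeff (rho eps n s j) 0 \<noteq> 0 \<and>
         degree (rho eps n s j) \<le> ell eps n s j \<and>
         (rho eps n s j, ell eps n s j) \<in> Rp j s \<and>
         monom 1 (ell eps n s j - degree (rho eps n s j)) * reflect_poly (rho eps n s j)
           \<in> MinSet j s \<and>
         ell eps n s j = Lc j s"
proof -
  obtain r rp l jp dp where st: "bm_state eps n s j = (r, rp, l, jp, dp)"
    by (metis prod_cases5)
  define f where "f = monom 1 (l - degree r) * reflect_poly r"
  from bm_inv[where eps = eps and s = s, OF jn] have r: "rec_pair (seq_poly n s) r l j"
    and lmin: "\<forall>g. g \<noteq> 0 \<and> is_annihilator j s g \<longrightarrow> l \<le> degree g"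
    unfolding bm_inv_def st by auto
  note f_props = reversal_is_annihilator[OF r jn f_def]
  have "f \<in> MinSet j s" "Lc j s = l"
    using MinSet_Lc_of_lower_bound[of f j s] f_props lmin by auto
  then show ?thesis
    using r Rp_iff_rec_pair[OF jn, where r = r and l = l and s = s]
    by (simp add: rho_def ell_def st f_def rec_pair_def)
qed

lemma ell_recurrences:
  fixes eps :: "'a::idom"
  assumes "1 \<le> j" "j \<le> n"
  shows "(Delta eps n s j = 0 \<longrightarrow>
            ell eps n s j = ell eps n s (j - 1) \<and> ee eps n s j = ee eps n s (j - 1) + 1) \<and>
         (Delta eps n s j \<noteq> 0 \<longrightarrow>
            int (ell eps n s j) = max (ee eps n s (j - 1)) 0 + int (ell eps n s (j - 1)) \<and>
            int (ell eps n s j) = jprime eps n s j + 1 - int (ell_int eps n s (jprime eps n s j)) \<and>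
            ee eps n s j = - \<bar>ee eps n s (j - 1)\<bar> + 1)"
proof -
  obtain i where j: "j = Suc i"
    using assms(1) by (cases j) auto
  have "ell eps n s i \<le> i"
    using assms by (intro bm_inv_ell bm_inv) (simp add: j)
  moreover have "int (ell eps n s j) = jprime eps n s j + 1 - int (ell_int eps n s (jprime eps n s j))"
    using assms by (intro bm_inv_ell bm_inv)
  ultimately show ?thesis
    by (auto simp: j ell_Suc ee_def max_def)
qed

theorem mainTheorem10:
  fixes eps :: "'a::idom" and s :: "nat \<Rightarrow> 'a" and n :: nat
  assumes "n \<ge> 1"
  shows "(\<forall>j\<le>n.
            coeff (rho eps n s j) 0 \<noteq> 0 \<and>
            degree (rho eps n s j) \<le> ell eps n s j \<and>
            (rho eps n s j, ell eps n s j) \<in> Rp j s \<and>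
            monom 1 (ell eps n s j - degree (rho eps n s j)) * reflect_poly (rho eps n s j)
              \<in> MinSet j s \<and>
            ell eps n s j = Lc j s) \<and>
         (\<forall>j. 1 \<le> j \<and> j \<le> n \<longrightarrow>
            (Delta eps n s j = 0 \<longrightarrow>
               ell eps n s j = ell eps n s (j - 1) \<and> ee eps n s j = ee eps n s (j - 1) + 1) \<and>
            (Delta eps n s j \<noteq> 0 \<longrightarrow>
               int (ell eps n s j) = max (ee eps n s (j - 1)) 0 + int (ell eps n s (j - 1)) \<and>
               int (ell eps n s j) = jprime eps n s j + 1 - int (ell_int eps n s (jprime eps n s j)) \<and>
               ee eps n s j = - \<bar>ee eps n s (j - 1)\<bar> + 1))"
  using rho_minimal[of _ n eps s] ell_recurrences[of _ n eps s] by blast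

end
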